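(* Let $d\ge1$ and $L\ge2$ be integers, $\Phi\in\mathbb{R}^{d\times d}$, and $W_1,\dots,W_L\in\mathbb{R}^{d\times d}$. Let $\mathcal{R}=\tfrac12\|W_{L:1}-\Phi\|_F^2$ and $D_l=W_{l+1}^\intercal W_{l+1}-W_lW_l^\intercal$ for $l=1,\dots,L-1$. Suppose there are $\alpha\ge 0$ and $\phi>0$ with $\|W_l\|_2\le\alpha$ for $l=1,\dots,L-1$ and $1\le\alpha^{2(L-1)}<L\phi^2$, and suppose $\|D_l\|_2\le\delta$ for $l=1,\dots,L-2$ and $\|I+D_{L-1}\|_2\le\varepsilon$, where $\delta\le(2L^3\phi^2)^{-1}$ and $\varepsilon\le(4L^2)^{-1}$. Then $$\|\nabla_L\mathcal{R}\|_F^2\ge\mathcal{R}.$$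
   Context: For $l_2\ge l_1$ write $W_{l_2:l_1}=W_{l_2}\cdots W_{l_1}$, empty products being the identity $I$. $\nabla_L\mathcal{R}=(W_{L:1}-\Phi)W_{L-1:1}^\intercal$ is the gradient of $\mathcal{R}(W_1,\dots,W_L)=\tfrac12\|W_L\cdots W_1-\Phi\|_F^2$ with respect to $W_L$. $\|\cdot\|_2$ is the spectral norm and $\|\cdot\|_F$ the Frobenius norm. *)

theory Defs
  imports "HOL-Analysis.Analysis"
begin

text \<open>Square d x d real matrices are modelled as real^'n^'n, d = CARD('n) \<ge> 1.\<close>

text \<open>Ordered product W_{hi:lo} = W hi ** ... ** W lo; identity if hi < lo.\<close>
definition mprod :: "(nat \<Rightarrow> real^'n^'n) \<Rightarrow> nat \<Rightarrow> nat \<Rightarrow> real^'n^'n" where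
  "mprod W hi lo = foldl (\<lambda>M k. W k ** M) (mat 1) [lo..<Suc hi]"

definition spec_norm :: "real^'n^'m \<Rightarrow> real" where
  "spec_norm A = onorm (\<lambda>x. A *v x)"

definition fro_norm :: "real^'n^'m \<Rightarrow> real" where
  "fro_norm A = sqrt (\<Sum>i\<in>UNIV. \<Sum>j\<in>UNIV. (A $ i $ j)^2)"

definition risk :: "nat \<Rightarrow> (nat \<Rightarrow> real^'n^'n) \<Rightarrow> real^'n^'n \<Rightarrow> real" where
  "risk L W Phi = (1/2) * (fro_norm (mprod W L 1 - Phi))^2"

definition grad_L :: "nat \<Rightarrow> (nat \<Rightarrow> real^'n^'n) \<Rightarrow> real^'n^'n \<Rightarrow> real^'n^'n" where
  "grad_L L W Phi = (mprod W L 1 - Phi) ** transpose (mprod W (L - 1) 1)"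

definition Dmat :: "(nat \<Rightarrow> real^'n^'n) \<Rightarrow> nat \<Rightarrow> real^'n^'n" where
  "Dmat W l = transpose (W (l+1)) ** W (l+1) - W l ** transpose (W l)"

end

theory Submission
  imports Defs
begin

(* Write P = W_{L-1:1}. The rows of the gradient are P applied to the rows of W_{L:1} - Phi, so
   it suffices that |P r|^2 >= |r|^2 / 2 for all r. Near-balancedness lets the factors of P P^T be
   moved one by one to the top layer:
     |P P^T - (W_{L-1} W_{L-1}^T)^(L-1)|_2 <= delta alpha^(2(L-2)) C(L-1,2) <= 1/4.
   The bound on I + D_{L-1} gives W_{L-1} W_{L-1}^T >= (1 - eps) I, so by Bernoulli its (L-1)-st
   power is >= (1 - (L-1) eps) I >= 7/8 I. Hence P P^T >= I/2, and as P is square the same lower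
   bound holds for P^T P. *)

lemma spec_norm_nonneg: "0 \<le> spec_norm A"
  unfolding spec_norm_def by (rule onorm_pos_le) (rule matrix_vector_mul_bounded_linear)

lemma norm_matrix_vector_le_spec_norm: "norm (A *v x) \<le> spec_norm A * norm x"
  unfolding spec_norm_def by (rule onorm) (rule matrix_vector_mul_bounded_linear)

lemma spec_norm_leI:
  assumes "\<And>x. norm (A *v x) \<le> c * norm x"
  shows "spec_norm A \<le> c"
  unfolding spec_norm_def by (rule onorm_le) (rule assms)

lemma spec_norm_mult_le: "spec_norm (A ** B) \<le> spec_norm A * spec_norm B"
proof -
  have "spec_norm (A ** B) = onorm ((\<lambda>x. A *v x) \<circ> (\<lambda>x. B *v x))"
    by (simp add: spec_norm_def o_def matrix_vector_mul_assoc)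
  also have "\<dots> \<le> spec_norm A * spec_norm B"
    unfolding spec_norm_def by (rule onorm_compose) (rule matrix_vector_mul_bounded_linear)+
  finally show ?thesis .
qed

lemma spec_norm_add_le: "spec_norm (A + B) \<le> spec_norm A + spec_norm B"
proof -
  have "spec_norm (A + B) = onorm (\<lambda>x. A *v x + B *v x)"
    by (simp add: spec_norm_def matrix_vector_mult_add_rdistrib)
  also have "\<dots> \<le> spec_norm A + spec_norm B"
    unfolding spec_norm_def by (rule onorm_triangle) (rule matrix_vector_mul_bounded_linear)+
  finally show ?thesis .
qed

lemma spec_norm_minus_commute: "spec_norm (A - B) = spec_norm (B - A)"
proof -
  have "spec_norm (A - B) = onorm (\<lambda>x. - ((B - A) *v x))"
    by (simp add: spec_norm_def matrix_vector_mult_diff_rdistrib)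
  then show ?thesis
    by (simp add: spec_norm_def onorm_neg)
qed

lemma spec_norm_mat_1_le: "spec_norm (mat 1) \<le> 1"
  by (rule spec_norm_leI) simp

lemma inner_matrix_vector_transpose:
  "inner x ((A :: real^'n^'m) *v y) = inner (transpose A *v x) y"
  by (simp add: dot_lmul_matrix)

lemma spec_norm_transpose_le: "spec_norm (transpose A) \<le> spec_norm A"
proof (rule spec_norm_leI)
  fix x
  let ?y = "transpose A *v x"
  have "norm ?y ^ 2 = inner x (A *v ?y)"
    by (simp add: inner_matrix_vector_transpose power2_norm_eq_inner)
  also have "\<dots> \<le> norm x * norm (A *v ?y)"
    using Cauchy_Schwarz_ineq2 abs_ge_self order_trans by blast
  also have "\<dots> \<le> norm x * (spec_norm A * norm ?y)"
    by (simp add: mult_left_mono norm_matrix_vector_le_spec_norm)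
  finally have "norm ?y * norm ?y \<le> (spec_norm A * norm x) * norm ?y"
    by (simp add: power2_eq_square algebra_simps)
  then show "norm ?y \<le> spec_norm A * norm x"
    by (cases "norm ?y = 0") (auto simp: spec_norm_nonneg)
qed

lemma spec_norm_transpose: "spec_norm (transpose A) = spec_norm A"
  using spec_norm_transpose_le[of A] spec_norm_transpose_le[of "transpose A"] by simp

lemma spec_norm_mult_transpose_le: "spec_norm (A ** transpose A) \<le> spec_norm A ^ 2"
  using spec_norm_mult_le[of A "transpose A"] by (simp add: spec_norm_transpose power2_eq_square)

lemma spec_norm_transpose_mult_le: "spec_norm (transpose A ** A) \<le> spec_norm A ^ 2"
  using spec_norm_mult_le[of "transpose A" A] by (simp add: spec_norm_transpose power2_eq_square)

lemma spec_norm_congruence_le: "spec_norm (A ** X ** transpose A) \<le> spec_norm A ^ 2 * spec_norm X"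
proof -
  have "spec_norm (A ** X ** transpose A) \<le> spec_norm (A ** X) * spec_norm A"
    using spec_norm_mult_le[of "A ** X" "transpose A"] by (simp add: spec_norm_transpose)
  also have "\<dots> \<le> spec_norm A * spec_norm X * spec_norm A"
    by (rule mult_right_mono[OF spec_norm_mult_le spec_norm_nonneg])
  finally show ?thesis
    by (simp add: power2_eq_square mult_ac)
qed

lemma inner_matrix_vector_le_spec_norm: "inner x (A *v x) \<le> spec_norm A * norm x ^ 2"
proof -
  have "inner x (A *v x) \<le> norm x * norm (A *v x)"
    using Cauchy_Schwarz_ineq2 abs_ge_self order_trans by blast
  also have "\<dots> \<le> norm x * (spec_norm A * norm x)"
    by (simp add: mult_left_mono norm_matrix_vector_le_spec_norm)
  finally show ?thesis
    by (simp add: power2_eq_square algebra_simps)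
qed

lemma inner_mult_transpose_eq_norm:
  "inner x (((A :: real^'n^'m) ** transpose A) *v x) = norm (transpose A *v x) ^ 2"
proof -
  have "inner x ((A ** transpose A) *v x) = inner x (A *v (transpose A *v x))"
    by (simp only: matrix_vector_mul_assoc)
  also have "\<dots> = inner (transpose A *v x) (transpose A *v x)"
    by (rule inner_matrix_vector_transpose)
  finally show ?thesis
    by (simp add: power2_norm_eq_inner)
qed

lemma fro_norm_eq_norm: "fro_norm A = norm A"
  by (simp add: fro_norm_def norm_vec_def L2_set_def sum_nonneg)

lemma norm_power2_eq_sum_rows:
  "norm (A :: 'a::real_normed_vector^'n) ^ 2 = (\<Sum>i\<in>UNIV. norm (A $ i) ^ 2)"
  by (simp add: norm_vec_def L2_set_def sum_nonneg)

lemma row_mult_transpose: "((E :: real^'n^'m) ** transpose P) $ i = P *v (E $ i)"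
  by (simp add: matrix_matrix_mult_def matrix_vector_mult_def transpose_def vec_eq_iff mult.commute)

lemma fro_norm_mult_transpose_ge:
  assumes "\<And>r. c * norm r ^ 2 \<le> norm (P *v r) ^ 2"
  shows "c * fro_norm E ^ 2 \<le> fro_norm (E ** transpose P) ^ 2"
proof -
  have "c * fro_norm E ^ 2 = (\<Sum>i\<in>UNIV. c * norm (E $ i) ^ 2)"
    by (simp add: fro_norm_eq_norm norm_power2_eq_sum_rows[of E] sum_distrib_left)
  also have "\<dots> \<le> (\<Sum>i\<in>UNIV. norm (P *v (E $ i)) ^ 2)"
    by (rule sum_mono) (rule assms)
  also have "\<dots> = fro_norm (E ** transpose P) ^ 2"
    by (simp add: fro_norm_eq_norm norm_power2_eq_sum_rows[of "E ** transpose P"] row_mult_transpose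
        del: transpose_matrix_vector)
  finally show ?thesis .
qed

(* As P is square, P^T is onto; for r = P^T x, Cauchy-Schwarz on |r|^2 = <x, P r> transfers
   the bound. *)
lemma norm_matrix_vector_ge_of_transpose:
  fixes P :: "real^'n^'n"
  assumes "0 < c" and P: "\<And>x. c * norm x ^ 2 \<le> norm (transpose P *v x) ^ 2"
  shows "c * norm r ^ 2 \<le> norm (P *v r) ^ 2"
proof -
  have "inj ((*v) (transpose P))"
  proof (rule injI)
    fix x y
    assume "transpose P *v x = transpose P *v y"
    then have "c * norm (x - y) ^ 2 \<le> 0"
      using P[of "x - y"]
      by (simp add: matrix_vector_mult_diff_distrib del: transpose_matrix_vector)
    then show "x = y"
      using \<open>0 < c\<close> by (simp add: mult_le_0_iff)
  qed
  then obtain x where r: "r = transpose P *v x"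
    using linear_injective_imp_surjective[OF matrix_vector_mul_linear] by (metis surjD)
  have "norm r ^ 2 = inner x (P *v r)"
    by (simp add: r inner_matrix_vector_transpose power2_norm_eq_inner del: transpose_matrix_vector)
  also have "\<dots> \<le> norm x * norm (P *v r)"
    using Cauchy_Schwarz_ineq2 abs_ge_self order_trans by blast
  finally have "(norm r ^ 2) ^ 2 \<le> (norm x * norm (P *v r)) ^ 2"
    by (rule power_mono) simp
  then have "c * (norm r ^ 2) ^ 2 \<le> c * norm x ^ 2 * norm (P *v r) ^ 2"
    using \<open>0 < c\<close> by (simp add: power_mult_distrib)
  also have "\<dots> \<le> norm r ^ 2 * norm (P *v r) ^ 2"
    using P[of x] r by (simp add: mult_right_mono)
  finally show ?thesis
    by (cases "r = 0") (simp_all add: power2_eq_square)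
qed

lemma matrix_diff_ldistrib: "(A :: 'a::ring_1^'n^'m) ** (B - C) = A ** B - A ** C"
  by (simp add: matrix_matrix_mult_def vec_eq_iff sum_subtractf right_diff_distrib)

lemma matrix_diff_rdistrib: "((A :: 'a::ring_1^'n^'m) - B) ** C = A ** C - B ** C"
  by (simp add: matrix_matrix_mult_def vec_eq_iff sum_subtractf left_diff_distrib)

primrec matpow :: "'a::semiring_1^'n^'n \<Rightarrow> nat \<Rightarrow> 'a^'n^'n" where
  "matpow A 0 = mat 1"
| "matpow A (Suc k) = A ** matpow A k"

lemma matpow_Suc_right: "matpow A (Suc k) = matpow A k ** A"
  by (induction k) (simp_all add: matrix_mul_assoc)

lemma matpow_mult_Suc: "matpow (A ** B) (Suc k) = A ** matpow (B ** A) k ** B"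
  by (induction k) (simp_all add: matrix_mul_assoc)

lemma spec_norm_matpow_le:
  assumes "spec_norm A \<le> b"
  shows "spec_norm (matpow A k) \<le> b ^ k"
proof (induction k)
  case 0
  show ?case using spec_norm_mat_1_le by simp
next
  case (Suc k)
  have "0 \<le> b"
    using assms spec_norm_nonneg order_trans by blast
  have "spec_norm (matpow A (Suc k)) \<le> spec_norm A * spec_norm (matpow A k)"
    using spec_norm_mult_le by simp
  also have "\<dots> \<le> b * b ^ k"
    using Suc assms \<open>0 \<le> b\<close> spec_norm_nonneg by (intro mult_mono) auto
  finally show ?case by simp
qed

lemma spec_norm_matpow_diff_le:
  assumes A: "spec_norm A \<le> b" and B: "spec_norm B \<le> b"
  shows "spec_norm (matpow A k - matpow B k) \<le> real k * b ^ (k - 1) * spec_norm (A - B)"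
proof (induction k)
  case 0
  show ?case by (simp add: spec_norm_def onorm_zero)
next
  case (Suc k)
  have b: "0 \<le> b"
    using A spec_norm_nonneg order_trans by blast
  have "matpow A (Suc k) - matpow B (Suc k)
      = A ** (matpow A k - matpow B k) + (A - B) ** matpow B k"
    by (simp add: matrix_diff_ldistrib matrix_diff_rdistrib)
  then have "spec_norm (matpow A (Suc k) - matpow B (Suc k))
      \<le> spec_norm (A ** (matpow A k - matpow B k)) + spec_norm ((A - B) ** matpow B k)"
    by (simp only: spec_norm_add_le)
  also have "\<dots> \<le> spec_norm A * spec_norm (matpow A k - matpow B k)
      + spec_norm (A - B) * spec_norm (matpow B k)"
    by (intro add_mono spec_norm_mult_le)
  also have "\<dots> \<le> b * (real k * b ^ (k - 1) * spec_norm (A - B)) + spec_norm (A - B) * b ^ k"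
  proof (rule add_mono)
    show "spec_norm A * spec_norm (matpow A k - matpow B k)
        \<le> b * (real k * b ^ (k - 1) * spec_norm (A - B))"
      by (rule mult_mono[OF A Suc b spec_norm_nonneg])
    show "spec_norm (A - B) * spec_norm (matpow B k) \<le> spec_norm (A - B) * b ^ k"
      by (rule mult_left_mono[OF spec_norm_matpow_le[OF B] spec_norm_nonneg])
  qed
  also have "\<dots> = real (Suc k) * b ^ (Suc k - 1) * spec_norm (A - B)"
    by (cases k) (simp_all add: algebra_simps)
  finally show ?case .
qed

lemma inner_matpow_ge:
  fixes M :: "real^'n^'n"
  assumes sym: "transpose M = M" and "0 \<le> m"
    and M: "\<And>x. m * norm x ^ 2 \<le> inner x (M *v x)"
  shows "m ^ k * norm x ^ 2 \<le> inner x (matpow M k *v x)"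
proof (induction k arbitrary: x rule: nat_induct2)
  case 0
  show ?case by (simp add: power2_norm_eq_inner)
next
  case 1
  show ?case using M by simp
next
  case (step k)
  have "m * norm x ^ 2 \<le> norm x * norm (M *v x)"
    using M[of x] Cauchy_Schwarz_ineq2[of x "M *v x"] by linarith
  then have "m * norm x \<le> norm (M *v x)"
    by (cases "norm x = 0") (auto simp: power2_eq_square mult.assoc mult.left_commute[of m])
  then have "m ^ 2 * norm x ^ 2 \<le> norm (M *v x) ^ 2"
    using \<open>0 \<le> m\<close> by (metis power_mono power_mult_distrib mult_nonneg_nonneg norm_ge_zero)
  then have "m ^ k * (m ^ 2 * norm x ^ 2) \<le> m ^ k * norm (M *v x) ^ 2"
    using \<open>0 \<le> m\<close> by (simp add: mult_left_mono)
  then have "m ^ (k + 2) * norm x ^ 2 \<le> m ^ k * norm (M *v x) ^ 2"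
    by (metis power_add mult.assoc)
  also have "\<dots> \<le> inner (M *v x) (matpow M k *v (M *v x))"
    by (rule step)
  also have "\<dots> = inner x (M *v (matpow M k *v (M *v x)))"
    by (subst inner_matrix_vector_transpose) (simp only: sym)
  also have "\<dots> = inner x (matpow M (k + 2) *v x)"
    by (simp only: add_2_eq_Suc' matpow.simps(2)[of M "Suc k"] matpow_Suc_right[of M k]
        matrix_vector_mul_assoc)
  finally show ?case .
qed

lemma mprod_Suc: "lo \<le> Suc k \<Longrightarrow> mprod W (Suc k) lo = W (Suc k) ** mprod W k lo"
  by (simp add: mprod_def)

lemma mprod_empty: "mprod W k (Suc k) = mat 1"
  by (simp add: mprod_def)

lemma gram_diff_matpow_Suc:
  "((V :: 'a::comm_ring_1^'n^'m) ** P) ** transpose (V ** P) - matpow (V ** transpose V) (Suc k)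
    = V ** (P ** transpose P - matpow (transpose V ** V) k) ** transpose V"
  unfolding matpow_mult_Suc
  by (simp add: matrix_transpose_mul matrix_mul_assoc matrix_diff_ldistrib matrix_diff_rdistrib)

lemma spec_norm_matpow_gram_diff_le:
  assumes "spec_norm (W l) \<le> \<alpha>" and "spec_norm (W (Suc l)) \<le> \<alpha>"
    and "spec_norm (Dmat W l) \<le> \<delta>"
  shows "spec_norm (matpow (W l ** transpose (W l)) m - matpow (transpose (W (Suc l)) ** W (Suc l)) m)
    \<le> real m * \<alpha> ^ (2 * (m - 1)) * \<delta>"
proof -
  let ?A = "W l ** transpose (W l)" and ?B = "transpose (W (Suc l)) ** W (Suc l)"
  have "spec_norm ?A \<le> \<alpha> ^ 2"
    using spec_norm_mult_transpose_le[of "W l"] power_mono[OF assms(1) spec_norm_nonneg, of 2]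
    by simp
  moreover have "spec_norm ?B \<le> \<alpha> ^ 2"
    using spec_norm_transpose_mult_le[of "W (Suc l)"] power_mono[OF assms(2) spec_norm_nonneg, of 2]
    by simp
  ultimately have "spec_norm (matpow ?A m - matpow ?B m)
      \<le> real m * (\<alpha> ^ 2) ^ (m - 1) * spec_norm (?A - ?B)"
    by (rule spec_norm_matpow_diff_le)
  also have "\<dots> \<le> real m * (\<alpha> ^ 2) ^ (m - 1) * \<delta>"
    using assms(3) by (intro mult_left_mono) (simp_all add: Dmat_def spec_norm_minus_commute)
  finally show ?thesis
    by (simp add: power_mult)
qed

(* The error at depth k+1 is the error at depth k plus that of replacing W_k W_k^T by
   W_{k+1}^T W_{k+1} in the k-th power, conjugated by W_{k+1}. *)
lemma spec_norm_gram_mprod_diff_le: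
  fixes W :: "nat \<Rightarrow> real^'n^'n"
  assumes "1 \<le> k"
    and "\<And>l. l \<in> {1..k} \<Longrightarrow> spec_norm (W l) \<le> \<alpha>"
    and "\<And>l. l \<in> {1..<k} \<Longrightarrow> spec_norm (Dmat W l) \<le> \<delta>"
  shows "spec_norm (mprod W k 1 ** transpose (mprod W k 1) - matpow (W k ** transpose (W k)) k)
    \<le> \<delta> * \<alpha> ^ (2 * (k - 1)) * real (k choose 2)"
  using assms
proof (induction k rule: nat_induct_at_least)
  case base
  show ?case
    by (simp add: mprod_Suc mprod_empty spec_norm_def onorm_zero numeral_2_eq_2)
next
  case (Suc k)
  define V where "V = W (Suc k)"
  define Q where "Q = mprod W k 1 ** transpose (mprod W k 1)"
  define A where "A = W k ** transpose (W k)"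
  define B where "B = transpose V ** V"
  have V: "spec_norm V \<le> \<alpha>"
    using Suc.prems(1) by (simp add: V_def)
  have "spec_norm (matpow A k - matpow B k) \<le> real k * \<alpha> ^ (2 * (k - 1)) * \<delta>"
    unfolding A_def B_def V_def using \<open>1 \<le> k\<close> Suc.prems
    by (intro spec_norm_matpow_gram_diff_le) auto
  moreover have "spec_norm (Q - matpow A k) \<le> \<delta> * \<alpha> ^ (2 * (k - 1)) * real (k choose 2)"
    using Suc by (simp add: Q_def A_def)
  ultimately have QB:
    "spec_norm (Q - matpow B k) \<le> \<delta> * \<alpha> ^ (2 * (k - 1)) * (real (k choose 2) + real k)"
    using spec_norm_add_le[of "Q - matpow A k" "matpow A k - matpow B k"]
    by (simp add: algebra_simps)
  have P: "mprod W (Suc k) 1 = V ** mprod W k 1"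
    by (simp add: mprod_Suc V_def)
  have "spec_norm (mprod W (Suc k) 1 ** transpose (mprod W (Suc k) 1) - matpow (V ** transpose V) (Suc k))
      \<le> spec_norm V ^ 2 * spec_norm (Q - matpow B k)"
    unfolding P gram_diff_matpow_Suc Q_def B_def by (rule spec_norm_congruence_le)
  also have "\<dots> \<le> \<alpha> ^ 2 * (\<delta> * \<alpha> ^ (2 * (k - 1)) * (real (k choose 2) + real k))"
    by (rule mult_mono[OF power_mono[OF V spec_norm_nonneg] QB]) (simp_all add: spec_norm_nonneg)
  also have "\<dots> = \<delta> * \<alpha> ^ (2 * (Suc k - 1)) * real (Suc k choose 2)"
  proof -
    have "2 * (Suc k - 1) = 2 + 2 * (k - 1)"
      using \<open>1 \<le> k\<close> by simp
    moreover have "real (Suc k choose 2) = real (k choose 2) + real k"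
      by (simp add: numeral_2_eq_2)
    ultimately show ?thesis
      by (simp add: power_add power2_eq_square mult_ac)
  qed
  finally show ?case
    by (simp only: V_def)
qed

lemma inner_gram_ge_of_Dmat:
  assumes "spec_norm (mat 1 + Dmat W l) \<le> \<epsilon>"
  shows "(1 - \<epsilon>) * norm x ^ 2 \<le> inner x ((W l ** transpose (W l)) *v x)"
proof -
  have "norm x ^ 2 + norm (W (l + 1) *v x) ^ 2 - inner x ((W l ** transpose (W l)) *v x)
      = inner x ((mat 1 + Dmat W l) *v x)"
    using inner_mult_transpose_eq_norm[of x "transpose (W (l + 1))"]
    by (simp add: Dmat_def matrix_vector_mult_add_rdistrib matrix_vector_mult_diff_rdistrib
        inner_add_right inner_diff_right power2_norm_eq_inner del: transpose_matrix_vector)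
  also have "\<dots> \<le> \<epsilon> * norm x ^ 2"
    using inner_matrix_vector_le_spec_norm[of x "mat 1 + Dmat W l"] assms
    by (meson mult_right_mono order_trans zero_le_power2)
  finally show ?thesis
    using zero_le_power2[of "norm (W (l + 1) *v x)"] unfolding left_diff_distrib by linarith
qed

lemma norm_transpose_mprod_ge:
  fixes W :: "nat \<Rightarrow> real^'n^'n"
  assumes "1 \<le> k"
    and "\<And>l. l \<in> {1..k} \<Longrightarrow> spec_norm (W l) \<le> \<alpha>"
    and "\<And>l. l \<in> {1..<k} \<Longrightarrow> spec_norm (Dmat W l) \<le> \<delta>"
    and "spec_norm (mat 1 + Dmat W k) \<le> \<epsilon>" and "\<epsilon> \<le> 1"
  shows "(1 - real k * \<epsilon> - \<delta> * \<alpha> ^ (2 * (k - 1)) * real (k choose 2)) * norm x ^ 2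
    \<le> norm (transpose (mprod W k 1) *v x) ^ 2"
proof -
  define P where "P = mprod W k 1"
  define M where "M = W k ** transpose (W k)"
  define e where "e = \<delta> * \<alpha> ^ (2 * (k - 1)) * real (k choose 2)"
  have "1 - real k * \<epsilon> \<le> (1 - \<epsilon>) ^ k"
    using Bernoulli_inequality[of "- \<epsilon>" k] \<open>\<epsilon> \<le> 1\<close> by simp
  then have "(1 - real k * \<epsilon>) * norm x ^ 2 \<le> (1 - \<epsilon>) ^ k * norm x ^ 2"
    by (rule mult_right_mono) simp
  also have "\<dots> \<le> inner x (matpow M k *v x)"
    using inner_gram_ge_of_Dmat[OF assms(4)] \<open>\<epsilon> \<le> 1\<close>
    by (intro inner_matpow_ge) (simp_all add: M_def matrix_transpose_mul)
  also have "\<dots> \<le> norm (transpose P *v x) ^ 2 + e * norm x ^ 2"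
  proof -
    have "inner x ((matpow M k - P ** transpose P) *v x) \<le> e * norm x ^ 2"
      using spec_norm_gram_mprod_diff_le[OF assms(1-3)]
        inner_matrix_vector_le_spec_norm[of x "matpow M k - P ** transpose P"]
      by (simp add: spec_norm_minus_commute P_def M_def e_def)
        (meson mult_right_mono order_trans zero_le_power2)
    then show ?thesis
      by (simp add: inner_mult_transpose_eq_norm matrix_vector_mult_diff_rdistrib inner_diff_right
          del: transpose_matrix_vector)
  qed
  finally show ?thesis
    by (simp add: P_def e_def algebra_simps)
qed

lemma imbalance_error_le:
  assumes "2 \<le> L" and "1 \<le> \<alpha> ^ (2 * (L - 1))" and "\<alpha> ^ (2 * (L - 1)) < real L * \<phi> ^ 2"
    and "\<delta> \<le> 1 / (2 * real L ^ 3 * \<phi> ^ 2)"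
  shows "\<delta> * \<alpha> ^ (2 * (L - 2)) * real ((L - 1) choose 2) \<le> 1 / 4"
proof -
  have "0 < real L * \<phi> ^ 2"
    using assms(2,3) by linarith
  then have "\<phi> \<noteq> 0"
    by auto
  have pow: "\<alpha> ^ (2 * (L - 2)) \<le> real L * \<phi> ^ 2"
  proof (cases "\<alpha> ^ 2 \<le> 1")
    case True
    then have "\<alpha> ^ (2 * (L - 2)) \<le> 1"
      by (simp add: power_mult power_le_one)
    then show ?thesis
      using assms(2,3) by linarith
  next
    case False
    then have "\<alpha> ^ (2 * (L - 2)) \<le> \<alpha> ^ (2 * (L - 1))"
      by (simp add: power_mult power_increasing)
    then show ?thesis
      using assms(3) by linarith
  qed
  have "2 * ((L - 1) choose 2) \<le> (L - 1) * (L - 1 - 1)"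
    unfolding choose_two by (rule times_div_less_eq_dividend)
  also have "\<dots> \<le> L * L"
    by (intro mult_le_mono diff_le_self order_trans[OF diff_le_self])
  finally have choose: "real ((L - 1) choose 2) \<le> real L ^ 2 / 2"
    by (simp add: power2_eq_square flip: of_nat_mult)
  have "\<delta> * \<alpha> ^ (2 * (L - 2)) * real ((L - 1) choose 2)
      \<le> 1 / (2 * real L ^ 3 * \<phi> ^ 2) * (\<alpha> ^ (2 * (L - 2)) * real ((L - 1) choose 2))"
    using mult_right_mono[OF assms(4), of "\<alpha> ^ (2 * (L - 2)) * real ((L - 1) choose 2)"]
    by (simp add: power_mult mult.assoc)
  also have "\<dots> \<le> 1 / (2 * real L ^ 3 * \<phi> ^ 2) * (real L * \<phi> ^ 2 * (real L ^ 2 / 2))"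
  proof (rule mult_left_mono)
    show "\<alpha> ^ (2 * (L - 2)) * real ((L - 1) choose 2) \<le> real L * \<phi> ^ 2 * (real L ^ 2 / 2)"
      by (rule mult_mono[OF pow choose]) (simp_all add: power_mult)
  qed simp
  also have "\<dots> = 1 / 4"
    using \<open>2 \<le> L\<close> \<open>\<phi> \<noteq> 0\<close> by (simp add: field_simps power2_eq_square power3_eq_cube)
  finally show ?thesis .
qed

lemma last_layer_error_le:
  assumes "2 \<le> L" and "0 \<le> \<epsilon>" and "\<epsilon> \<le> 1 / (4 * real L ^ 2)"
  shows "real (L - 1) * \<epsilon> \<le> 1 / 8" and "\<epsilon> \<le> 1"
proof -
  have "real (L - 1) * \<epsilon> \<le> real L * (1 / (4 * real L ^ 2))"
    using assms(2,3) by (intro mult_mono) simp_all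
  also have "\<dots> \<le> 1 / 8"
    using \<open>2 \<le> L\<close> by (simp add: field_simps power2_eq_square)
  finally show "real (L - 1) * \<epsilon> \<le> 1 / 8" .
  moreover have "\<epsilon> \<le> real (L - 1) * \<epsilon>"
    using mult_right_mono[of 1 "real (L - 1)" \<epsilon>] assms(1,2) by simp
  ultimately show "\<epsilon> \<le> 1"
    by linarith
qed

theorem lemma6:
  fixes W :: "nat \<Rightarrow> real^'n^'n" and Phi :: "real^'n^'n"
    and L :: nat and \<alpha> \<phi> \<delta> \<epsilon> :: real
  assumes "L \<ge> 2"
    and "\<alpha> \<ge> 0" and "\<phi> > 0"
    and "\<forall>l\<in>{1..L-1}. spec_norm (W l) \<le> \<alpha>"
    and "1 \<le> \<alpha> ^ (2*(L-1))" and "\<alpha> ^ (2*(L-1)) < real L * \<phi>^2"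
    and "\<forall>l\<in>{1..L-2}. spec_norm (Dmat W l) \<le> \<delta>"
    and "spec_norm (mat 1 + Dmat W (L-1)) \<le> \<epsilon>"
    and "\<delta> \<le> 1 / (2 * real L ^ 3 * \<phi>^2)"
    and "\<epsilon> \<le> 1 / (4 * real L ^ 2)"
  shows "(fro_norm (grad_L L W Phi))^2 \<ge> risk L W Phi"
proof -
  define K where "K = L - 1"
  have K: "1 \<le> K" "K - 1 = L - 2" "{1..<K} = {1..L-2}"
    using \<open>L \<ge> 2\<close> by (auto simp: K_def)
  have W: "\<And>l. l \<in> {1..K} \<Longrightarrow> spec_norm (W l) \<le> \<alpha>"
    using assms(4) by (simp add: K_def)
  have D: "\<And>l. l \<in> {1..<K} \<Longrightarrow> spec_norm (Dmat W l) \<le> \<delta>"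
    using assms(7) unfolding K(3) by blast
  have "0 \<le> \<epsilon>"
    using assms(8) spec_norm_nonneg order_trans by blast
  then have "real K * \<epsilon> \<le> 1 / 8" "\<epsilon> \<le> 1"
    using last_layer_error_le[OF assms(1) _ assms(10)] by (simp_all add: K_def)
  moreover have "\<delta> * \<alpha> ^ (2 * (K - 1)) * real (K choose 2) \<le> 1 / 4"
    using imbalance_error_le[OF assms(1,5,6,9)] unfolding K(2) by (simp add: K_def)
  ultimately have "1 / 2 \<le> 1 - real K * \<epsilon> - \<delta> * \<alpha> ^ (2 * (K - 1)) * real (K choose 2)"
    by linarith
  from mult_right_mono[OF this zero_le_power2]
  have "1 / 2 * norm x ^ 2 \<le> norm (transpose (mprod W K 1) *v x) ^ 2" for x
    using norm_transpose_mprod_ge[OF K(1) W D assms(8)[folded K_def] \<open>\<epsilon> \<le> 1\<close>, of x]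
    by (rule order_trans)
  then have "1 / 2 * norm r ^ 2 \<le> norm (mprod W K 1 *v r) ^ 2" for r
    by (rule norm_matrix_vector_ge_of_transpose[rotated]) simp
  then have "1 / 2 * fro_norm (mprod W L 1 - Phi) ^ 2 \<le> fro_norm (grad_L L W Phi) ^ 2"
    unfolding grad_L_def K_def by (rule fro_norm_mult_transpose_ge)
  then show ?thesis
    by (simp add: risk_def)
qed

end
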